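(* Let $M$ be a finite abelian group of order $m$, $J$ a Jacobi function on $M$, $c\in\hat{M}$ with $c^2=1$, and $i\colon\hat{M}\setminus\{c\}\to\hat{M}\setminus\{1\}$ a bijection with $i(x)=x\,i(x^{-1})$ for all $x\ne c$, such that $J(\alpha,\beta)=\frac{1}{m}\sum_{x\in\hat{M}\setminus\{c\}}\alpha(i(x))\beta(i(x)x^{-1})$ for all $\alpha,\beta\in M$. Let $F=\hat{M}\sqcup\{0\}$ with the operation $\oplus$ for which $0$ is the identity and, for $x,y\ne0$, $x\oplus y=0$ if $x=cy$ and $x\oplus y=x\,i(x/y)^{-1}$ otherwise. Then $\oplus$ is associative on $F$.
   Context: $\hat{M}$ is the Pontryagin dual of $M$, written multiplicatively with identity $1$; for $\alpha\in M$, $x\in\hat{M}$, $\alpha(x)$ is the value of the character $x$ at $\alpha$. $\delta(\alpha)=1$ if $\alpha$ is the identity of $M$ and $0$ otherwise. A Jacobi function on $M$ is a function $J\colon M\times M\to\mathbf{C}$ satisfying: (A) $J(\alpha,\beta)=J(\beta,\alpha)$; (B) with $J^*(\alpha,\beta)=-\delta(\alpha)-\delta(\beta)+J(\alpha,\beta)$, $J^*(\alpha,\beta)J^*(\alpha\beta,\gamma)=J^*(\alpha,\beta\gamma)J^*(\beta,\gamma)$; (C) $\sum_{\beta\in M}J(\alpha_1\beta,\alpha_2\beta^{-1})J(\alpha_3\beta,\alpha_4\beta^{-1})=J(\alpha_1\alpha_4,\alpha_2\alpha_3)$; all for all elements of $M$. *)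

theory Defs
  imports Complex_Main
begin

text \<open>The finite abelian group M is modelled as a finite type of class ab_group_add
  (written additively: identity 0, product \<alpha>\<beta> is \<alpha> + \<beta>, inverse is uminus).\<close>

definition character :: "('a::ab_group_add \<Rightarrow> complex) \<Rightarrow> bool" where
  "character \<chi> \<longleftrightarrow> (\<forall>a b. \<chi> (a + b) = \<chi> a * \<chi> b) \<and> \<chi> 0 = 1"

definition dual :: "('a::ab_group_add \<Rightarrow> complex) set" where
  "dual = {\<chi>. character \<chi>}"

definition char_mult :: "('a \<Rightarrow> complex) \<Rightarrow> ('a \<Rightarrow> complex) \<Rightarrow> ('a \<Rightarrow> complex)" where
  "char_mult x y = (\<lambda>a. x a * y a)"

definition char_one :: "'a \<Rightarrow> complex" where
  "char_one = (\<lambda>a. 1)"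

definition char_inv :: "('a \<Rightarrow> complex) \<Rightarrow> ('a \<Rightarrow> complex)" where
  "char_inv x = (\<lambda>a. inverse (x a))"

definition kdelta :: "'a::zero \<Rightarrow> complex" where
  "kdelta a = (if a = 0 then 1 else 0)"

definition Jstar :: "('a::zero \<Rightarrow> 'a \<Rightarrow> complex) \<Rightarrow> 'a \<Rightarrow> 'a \<Rightarrow> complex" where
  "Jstar J a b = - kdelta a - kdelta b + J a b"

definition jacobi_function :: "('a::{finite,ab_group_add} \<Rightarrow> 'a \<Rightarrow> complex) \<Rightarrow> bool" where
  "jacobi_function J \<longleftrightarrow>
     (\<forall>a b. J a b = J b a) \<and>
     (\<forall>a b g. Jstar J a b * Jstar J (a + b) g = Jstar J a (b + g) * Jstar J b g) \<and>
     (\<forall>a1 a2 a3 a4. (\<Sum>b\<in>UNIV. J (a1 + b) (a2 - b) * J (a3 + b) (a4 - b)) = J (a1 + a4) (a2 + a3))"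

text \<open>F = dual \<squnion> {0}, with None playing the role of the adjoined element 0.\<close>

definition Fset :: "('a::ab_group_add \<Rightarrow> complex) option set" where
  "Fset = {None} \<union> Some ` dual"

fun oplus :: "('a \<Rightarrow> complex) \<Rightarrow> (('a \<Rightarrow> complex) \<Rightarrow> ('a \<Rightarrow> complex))
     \<Rightarrow> ('a \<Rightarrow> complex) option \<Rightarrow> ('a \<Rightarrow> complex) option \<Rightarrow> ('a \<Rightarrow> complex) option" where
  "oplus c i None y = y"
| "oplus c i (Some x) None = Some x"
| "oplus c i (Some x) (Some y) =
     (if x = char_mult c y then None
      else Some (char_mult x (char_inv (i (char_mult x (char_inv y))))))"

end

(* With J*(x,y) = J(x,y) - delta(x) - delta(y), the Fourier formula for J makes the character
   transform of J* explicit: for characters a, b and m = |M|,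
     sum over x, y of J*(x,y) a(x)^-1 b(y)^-1 = m ([a \<oplus> b = 1] - [a = 1] - [b = 1]).
   Transforming both sides of the cocycle identity (B) against characters a, b, w in the three
   group variables and using multiplicativity of characters, the left side becomes
   m ([(a \<oplus> b) \<oplus> w = 1] - E) and the right side m ([a \<oplus> (b \<oplus> w) = 1] - E), with the same
   term E, symmetric in a, b, w. Hence (a \<oplus> b) \<oplus> w = 1 iff a \<oplus> (b \<oplus> w) = 1, and since \<oplus>
   commutes with multiplication by a character, the two sides agree for every value. *)

theory Submission
  imports Defs "HOL-Library.Cardinality"
begin

section \<open>Characters of a finite abelian group\<close>

lemma dual_add: "\<chi> \<in> dual \<Longrightarrow> \<chi> (a + b) = \<chi> a * \<chi> b"
  by (simp add: dual_def character_def)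

lemma dual_zero: "\<chi> \<in> dual \<Longrightarrow> \<chi> 0 = 1"
  by (simp add: dual_def character_def)

lemma dual_mult_minus: "\<chi> \<in> dual \<Longrightarrow> \<chi> a * \<chi> (- a) = 1"
  by (metis dual_add dual_zero right_minus)

lemma dual_nonzero: "\<chi> \<in> dual \<Longrightarrow> \<chi> a \<noteq> 0"
  by (metis dual_mult_minus mult_zero_left zero_neq_one)

lemma dual_minus: "\<chi> \<in> dual \<Longrightarrow> \<chi> (- a) = inverse (\<chi> a)"
  by (metis dual_mult_minus inverse_unique)

definition char_div :: "('a \<Rightarrow> complex) \<Rightarrow> ('a \<Rightarrow> complex) \<Rightarrow> 'a \<Rightarrow> complex" where
  "char_div x y = char_mult x (char_inv y)"

lemma char_mult_in_dual: "x \<in> dual \<Longrightarrow> y \<in> dual \<Longrightarrow> char_mult x y \<in> dual"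
  by (simp add: dual_def character_def char_mult_def)

lemma char_inv_in_dual: "x \<in> dual \<Longrightarrow> char_inv x \<in> dual"
  by (simp add: dual_def character_def char_inv_def)

lemma char_one_in_dual: "char_one \<in> dual"
  by (simp add: dual_def character_def char_one_def)

lemma char_div_in_dual: "x \<in> dual \<Longrightarrow> y \<in> dual \<Longrightarrow> char_div x y \<in> dual"
  by (simp add: char_div_def char_mult_in_dual char_inv_in_dual)

lemma char_mult_commute: "char_mult x y = char_mult y x"
  by (simp add: char_mult_def fun_eq_iff mult.commute)

lemma char_mult_one [simp]: "char_mult char_one x = x"
  by (simp add: char_mult_def char_one_def)

lemma char_mult_div_cancel: "y \<in> dual \<Longrightarrow> char_mult y (char_div x y) = x"
  by (simp add: fun_eq_iff char_div_def char_mult_def char_inv_def dual_nonzero)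

lemma char_div_mult_cancel: "y \<in> dual \<Longrightarrow> char_div (char_mult x y) y = x"
  by (simp add: fun_eq_iff char_div_def char_mult_def char_inv_def dual_nonzero)

lemma char_div_div_cancel: "x \<in> dual \<Longrightarrow> y \<in> dual \<Longrightarrow> char_div x (char_div x y) = y"
  by (simp add: fun_eq_iff char_div_def char_mult_def char_inv_def dual_nonzero)

lemma char_div_left_cancel: "x \<in> dual \<Longrightarrow> char_div (char_div x t) x = char_inv t"
  by (simp add: fun_eq_iff char_div_def char_mult_def char_inv_def dual_nonzero)

lemma char_inv_eq_char_div_iff:
  assumes t: "t \<in> dual" and v: "v \<in> dual" and w: "w \<in> dual"
  shows "char_inv t = char_div w v \<longleftrightarrow> t = char_div v w"
proof -
  have "inverse (t x) = w x * inverse (v x) \<longleftrightarrow> t x = v x * inverse (w x)" for x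
    using t v w by (auto simp: dual_nonzero field_simps)
  then show ?thesis
    by (simp add: fun_eq_iff char_div_def char_mult_def char_inv_def)
qed

lemma char_div_eq_iff: "y \<in> dual \<Longrightarrow> char_div x y = z \<longleftrightarrow> x = char_mult z y"
  by (auto simp: fun_eq_iff char_div_def char_mult_def char_inv_def dual_nonzero field_simps)

lemma dual_power_card:
  assumes \<chi>: "\<chi> \<in> (dual :: ('a::{finite,ab_group_add} \<Rightarrow> complex) set)"
  shows "\<chi> a ^ CARD('a) = 1"
proof -
  have "(\<Prod>b\<in>UNIV. \<chi> b) * \<chi> a ^ CARD('a) = (\<Prod>b\<in>UNIV. \<chi> (b + a))"
    using \<chi> by (simp add: dual_add prod.distrib)
  also have "\<dots> = (\<Prod>b\<in>UNIV. \<chi> b)"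
    by (rule prod.reindex_bij_witness[of _ "\<lambda>b. b - a" "\<lambda>b. b + a"]) auto
  finally show ?thesis
    using \<chi> by (simp add: dual_nonzero)
qed

lemma finite_dual: "finite (dual :: ('a::{finite,ab_group_add} \<Rightarrow> complex) set)"
proof (rule finite_subset)
  let ?roots = "{z::complex. z ^ CARD('a) = 1}"
  show "dual \<subseteq> {f. \<forall>a. (a \<in> (UNIV :: 'a set) \<longrightarrow> f a \<in> ?roots) \<and> (a \<notin> UNIV \<longrightarrow> f a = 0)}"
    by (auto simp: dual_power_card)
  show "finite {f. \<forall>a. (a \<in> (UNIV :: 'a set) \<longrightarrow> f a \<in> ?roots) \<and> (a \<notin> UNIV \<longrightarrow> f a = 0)}"
    by (intro finite_set_of_finite_funs finite_roots_unity) auto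
qed

lemma sum_dual:
  assumes \<chi>: "\<chi> \<in> (dual :: ('a::{finite,ab_group_add} \<Rightarrow> complex) set)"
  shows "(\<Sum>a\<in>UNIV. \<chi> a) = of_nat CARD('a) * of_bool (\<chi> = char_one)"
proof (cases "\<chi> = char_one")
  case False
  then obtain a where a: "\<chi> a \<noteq> 1"
    by (auto simp: char_one_def fun_eq_iff)
  have "(\<Sum>b\<in>UNIV. \<chi> b) * \<chi> a = (\<Sum>b\<in>UNIV. \<chi> (b + a))"
    using \<chi> by (simp add: dual_add sum_distrib_right)
  also have "\<dots> = (\<Sum>b\<in>UNIV. \<chi> b)"
    by (rule sum.reindex_bij_witness[of _ "\<lambda>b. b - a" "\<lambda>b. b + a"]) auto
  finally have "(\<Sum>b\<in>UNIV. \<chi> b) * (\<chi> a - 1) = 0"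
    by (simp add: algebra_simps)
  with a False show ?thesis by simp
qed (simp add: char_one_def)

lemma dual_orthogonality:
  assumes "\<chi> \<in> (dual :: ('a::{finite,ab_group_add} \<Rightarrow> complex) set)" and "\<psi> \<in> dual"
  shows "(\<Sum>a\<in>UNIV. \<chi> a * inverse (\<psi> a)) = of_nat CARD('a) * of_bool (\<chi> = \<psi>)"
  using sum_dual[OF char_div_in_dual[OF assms]] char_div_eq_iff[OF assms(2), of \<chi> char_one]
  by (simp add: char_div_def char_mult_def char_inv_def char_one_def)

lemma sum_inverse_dual:
  assumes "\<psi> \<in> (dual :: ('a::{finite,ab_group_add} \<Rightarrow> complex) set)"
  shows "(\<Sum>a\<in>UNIV. inverse (\<psi> a)) = of_nat CARD('a) * of_bool (\<psi> = char_one)"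
  using dual_orthogonality[OF char_one_in_dual assms] by (auto simp: char_one_def)

lemma sum_kdelta: "(\<Sum>b\<in>UNIV. kdelta b * f b) = f (0 :: 'a::{finite,zero})"
proof -
  have "(\<Sum>b\<in>UNIV. kdelta b * f b) = (\<Sum>b\<in>UNIV. if b = 0 then f b else 0)"
    by (rule sum.cong) (simp_all add: kdelta_def)
  then show ?thesis by simp
qed

lemma sum_reverse3: "(\<Sum>x\<in>A. \<Sum>y\<in>B. \<Sum>z\<in>C. f x y z) = (\<Sum>z\<in>C. \<Sum>y\<in>B. \<Sum>x\<in>A. f x y z)"
proof -
  have "(\<Sum>x\<in>A. \<Sum>y\<in>B. \<Sum>z\<in>C. f x y z) = (\<Sum>x\<in>A. \<Sum>z\<in>C. \<Sum>y\<in>B. f x y z)"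
    by (rule sum.cong[OF refl]) (rule sum.swap)
  also have "\<dots> = (\<Sum>z\<in>C. \<Sum>x\<in>A. \<Sum>y\<in>B. f x y z)"
    by (rule sum.swap)
  also have "\<dots> = (\<Sum>z\<in>C. \<Sum>y\<in>B. \<Sum>x\<in>A. f x y z)"
    by (rule sum.cong[OF refl]) (rule sum.swap)
  finally show ?thesis .
qed

lemma sum_kdelta_add: "(\<Sum>y\<in>UNIV. f y * kdelta (x + y)) = f (- x :: 'a::{finite,ab_group_add})"
proof -
  have "(\<Sum>y\<in>UNIV. f y * kdelta (x + y)) = (\<Sum>y\<in>UNIV. if y = - x then f y else 0)"
    by (rule sum.cong) (auto simp: kdelta_def add_eq_0_iff)
  then show ?thesis by simp
qed

lemma sum_of_bool_eq_point:
  "finite A \<Longrightarrow> (\<Sum>t\<in>A. of_bool (t = v) :: 'c::semiring_1) = of_bool (v \<in> A)"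
  by (simp add: of_bool_def)

lemma sum_expansion_orthogonality:
  fixes h :: "'b \<Rightarrow> 'a::{finite,ab_group_add} \<Rightarrow> complex"
  assumes "finite T" and "\<And>t. t \<in> T \<Longrightarrow> h t \<in> dual" and "w \<in> dual"
  shows "(\<Sum>z\<in>UNIV. (\<Sum>t\<in>T. g t * h t z) * inverse (w z)) =
    of_nat CARD('a) * (\<Sum>t\<in>T. of_bool (h t = w) * g t)"
proof -
  have "(\<Sum>z\<in>UNIV. (\<Sum>t\<in>T. g t * h t z) * inverse (w z)) =
      (\<Sum>t\<in>T. g t * (\<Sum>z\<in>UNIV. h t z * inverse (w z)))"
    by (simp add: sum_distrib_left sum_distrib_right mult.assoc sum.swap[of _ UNIV])
  also have "\<dots> = (\<Sum>t\<in>T. g t * (of_nat CARD('a) * of_bool (h t = w)))"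
    using assms by (intro sum.cong) (simp_all add: dual_orthogonality)
  also have "\<dots> = of_nat CARD('a) * (\<Sum>t\<in>T. of_bool (h t = w) * g t)"
    by (simp add: sum_distrib_left mult_ac)
  finally show ?thesis .
qed

section \<open>Functions given by a character expansion\<close>

definition pair_count :: "'b set \<Rightarrow> ('b \<Rightarrow> 'c) \<Rightarrow> ('b \<Rightarrow> 'c) \<Rightarrow> 'c \<Rightarrow> 'c \<Rightarrow> complex" where
  "pair_count T p q u v = (\<Sum>t\<in>T. of_bool (p t = u \<and> q t = v))"

definition jstar_coeff ::
    "'b set \<Rightarrow> ('b \<Rightarrow> 'a \<Rightarrow> complex) \<Rightarrow> ('b \<Rightarrow> 'a \<Rightarrow> complex) \<Rightarrow> ('a \<Rightarrow> complex) \<Rightarrow> ('a \<Rightarrow> complex) \<Rightarrow> complex"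
  where "jstar_coeff T p q u v =
    pair_count T p q u v - of_bool (u = char_one) - of_bool (v = char_one)"

lemma jstar_coeff_swap: "jstar_coeff T q p u v = jstar_coeff T p q v u"
  by (simp add: jstar_coeff_def pair_count_def conj_commute)

lemma Jstar_swap: "Jstar (\<lambda>x y. J y x) x y = Jstar J y x"
  by (simp add: Jstar_def)

locale character_expansion =
  fixes J :: "'a::{finite,ab_group_add} \<Rightarrow> 'a \<Rightarrow> complex"
    and T :: "'b set"
    and p q :: "'b \<Rightarrow> 'a \<Rightarrow> complex"
  assumes finite_index: "finite T"
    and p_dual: "t \<in> T \<Longrightarrow> p t \<in> dual"
    and q_dual: "t \<in> T \<Longrightarrow> q t \<in> dual"
    and J_expansion: "J x y = 1 / of_nat CARD('a) * (\<Sum>t\<in>T. p t x * q t y)"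
begin

lemma character_expansion_swap: "character_expansion (\<lambda>x y. J y x) T q p"
  by unfold_locales (simp_all add: finite_index p_dual q_dual J_expansion mult.commute)

lemma jstar_transform_snd:
  assumes w: "w \<in> dual"
  shows "(\<Sum>z\<in>UNIV. Jstar J s z * inverse (w z)) =
    (\<Sum>t\<in>T. of_bool (q t = w) * p t s) - of_nat CARD('a) * of_bool (w = char_one) * kdelta s - 1"
proof -
  have "(\<Sum>z\<in>UNIV. J s z * inverse (w z)) =
      1 / of_nat CARD('a) * (\<Sum>z\<in>UNIV. (\<Sum>t\<in>T. p t s * q t z) * inverse (w z))"
    by (simp only: J_expansion mult.assoc flip: sum_distrib_left)
  also have "\<dots> = (\<Sum>t\<in>T. of_bool (q t = w) * p t s)"
    by (simp add: sum_expansion_orthogonality[OF finite_index q_dual w])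
  finally have "(\<Sum>z\<in>UNIV. J s z * inverse (w z)) = (\<Sum>t\<in>T. of_bool (q t = w) * p t s)" .
  moreover have "(\<Sum>z\<in>UNIV. Jstar J s z * inverse (w z)) = (\<Sum>z\<in>UNIV. J s z * inverse (w z))
      - kdelta s * (\<Sum>z\<in>UNIV. inverse (w z)) - (\<Sum>z\<in>UNIV. kdelta z * inverse (w z))"
    by (simp add: Jstar_def sum_subtractf sum.distrib sum_distrib_left algebra_simps)
  ultimately show ?thesis
    using w by (simp add: sum_inverse_dual sum_kdelta dual_zero)
qed

lemma jstar_transform:
  assumes u: "u \<in> dual" and v: "v \<in> dual"
  shows "(\<Sum>x\<in>UNIV. \<Sum>y\<in>UNIV. Jstar J x y * inverse (u x) * inverse (v y)) =
    of_nat CARD('a) * jstar_coeff T p q u v"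
proof -
  have "(\<Sum>x\<in>UNIV. \<Sum>y\<in>UNIV. Jstar J x y * inverse (u x) * inverse (v y)) =
      (\<Sum>x\<in>UNIV. (\<Sum>y\<in>UNIV. Jstar J x y * inverse (v y)) * inverse (u x))"
    unfolding sum_distrib_right by (intro sum.cong refl) (simp add: mult_ac)
  also have "\<dots> = (\<Sum>x\<in>UNIV. ((\<Sum>t\<in>T. of_bool (q t = v) * p t x)
      - of_nat CARD('a) * of_bool (v = char_one) * kdelta x - 1) * inverse (u x))"
    by (simp only: jstar_transform_snd[OF v])
  also have "\<dots> = (\<Sum>x\<in>UNIV. (\<Sum>t\<in>T. of_bool (q t = v) * p t x) * inverse (u x))
      - of_nat CARD('a) * of_bool (v = char_one) * (\<Sum>x\<in>UNIV. kdelta x * inverse (u x))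
      - (\<Sum>x\<in>UNIV. inverse (u x))"
    by (simp add: sum_subtractf sum.distrib sum_distrib_left algebra_simps)
  also have "\<dots> = of_nat CARD('a) * (\<Sum>t\<in>T. of_bool (p t = u) * of_bool (q t = v))
      - of_nat CARD('a) * of_bool (v = char_one) - of_nat CARD('a) * of_bool (u = char_one)"
    using u by (simp add: sum_expansion_orthogonality[OF finite_index p_dual u] sum_kdelta
        dual_zero sum_inverse_dual)
  finally show ?thesis
    by (simp add: jstar_coeff_def pair_count_def of_bool_conj algebra_simps)
qed

lemma sum_jstar_antidiagonal:
  assumes w: "w \<in> dual"
  shows "(\<Sum>x\<in>UNIV. Jstar J x (- x) * inverse (w x)) =
    (\<Sum>t\<in>T. of_bool (char_div (p t) (q t) = w)) - 2"
proof -
  have "J x (- x) = 1 / of_nat CARD('a) * (\<Sum>t\<in>T. char_div (p t) (q t) x)" for x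
    unfolding J_expansion
    by (intro arg_cong[where f = "\<lambda>s. 1 / of_nat CARD('a) * s"] sum.cong)
      (simp_all add: char_div_def char_mult_def char_inv_def dual_minus q_dual)
  then have "(\<Sum>x\<in>UNIV. J x (- x) * inverse (w x)) =
      1 / of_nat CARD('a) * (\<Sum>x\<in>UNIV. (\<Sum>t\<in>T. char_div (p t) (q t) x) * inverse (w x))"
    by (simp only: mult.assoc flip: sum_distrib_left)
  also have "\<dots> = (\<Sum>t\<in>T. of_bool (char_div (p t) (q t) = w))"
    using sum_expansion_orthogonality[OF finite_index _ w, where g = "\<lambda>_. 1"]
    by (simp add: char_div_in_dual p_dual q_dual)
  finally have "(\<Sum>x\<in>UNIV. J x (- x) * inverse (w x)) = (\<Sum>t\<in>T. of_bool (char_div (p t) (q t) = w))" .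
  moreover have "(\<Sum>x\<in>UNIV. Jstar J x (- x) * inverse (w x)) =
      (\<Sum>x\<in>UNIV. J x (- x) * inverse (w x)) - 2 * (\<Sum>x\<in>UNIV. kdelta x * inverse (w x))"
    by (simp add: Jstar_def kdelta_def sum_subtractf sum_distrib_left algebra_simps)
  ultimately show ?thesis
    using w by (simp add: sum_kdelta dual_zero)
qed

lemma transform_cocycle_lhs:
  assumes a: "a \<in> dual" and b: "b \<in> dual" and w: "w \<in> dual"
  shows "(\<Sum>x\<in>UNIV. \<Sum>y\<in>UNIV. \<Sum>z\<in>UNIV.
      Jstar J x y * Jstar J (x + y) z * inverse (a x) * inverse (b y) * inverse (w z)) =
    of_nat CARD('a) *
      ((\<Sum>t\<in>T. of_bool (q t = w) * jstar_coeff T p q (char_div a (p t)) (char_div b (p t)))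
      - of_bool (w = char_one) * ((\<Sum>t\<in>T. of_bool (char_div (p t) (q t) = char_div a b)) - 2)
      - jstar_coeff T p q a b)"
proof -
  define F where "F x y = Jstar J x y * inverse (a x) * inverse (b y)" for x y
  have shifted: "(\<Sum>x\<in>UNIV. \<Sum>y\<in>UNIV. F x y * p t (x + y)) =
      of_nat CARD('a) * jstar_coeff T p q (char_div a (p t)) (char_div b (p t))" if t: "t \<in> T" for t
  proof -
    have "F x y * p t (x + y) =
        Jstar J x y * inverse (char_div a (p t) x) * inverse (char_div b (p t) y)" for x y
      using t by (simp add: F_def char_div_def char_mult_def char_inv_def dual_add p_dual)
    then show ?thesis
      using a b t by (simp add: jstar_transform char_div_in_dual p_dual)
  qed
  have antidiagonal: "(\<Sum>x\<in>UNIV. \<Sum>y\<in>UNIV. F x y * kdelta (x + y)) =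
      (\<Sum>t\<in>T. of_bool (char_div (p t) (q t) = char_div a b)) - 2"
  proof -
    have "(\<Sum>y\<in>UNIV. F x y * kdelta (x + y)) = Jstar J x (- x) * inverse (char_div a b x)" for x
      using b by (simp add: sum_kdelta_add F_def char_div_def char_mult_def char_inv_def dual_minus)
    then show ?thesis
      using a b by (simp add: sum_jstar_antidiagonal char_div_in_dual)
  qed
  have unshifted: "(\<Sum>x\<in>UNIV. \<Sum>y\<in>UNIV. F x y) = of_nat CARD('a) * jstar_coeff T p q a b"
    using a b by (simp add: F_def jstar_transform)
  have "(\<Sum>x\<in>UNIV. \<Sum>y\<in>UNIV. \<Sum>z\<in>UNIV.
      Jstar J x y * Jstar J (x + y) z * inverse (a x) * inverse (b y) * inverse (w z)) =
      (\<Sum>x\<in>UNIV. \<Sum>y\<in>UNIV. F x y * (\<Sum>z\<in>UNIV. Jstar J (x + y) z * inverse (w z)))"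
    by (simp add: F_def sum_distrib_left mult_ac)
  also have "\<dots> = (\<Sum>x\<in>UNIV. \<Sum>y\<in>UNIV. (\<Sum>t\<in>T. of_bool (q t = w) * (F x y * p t (x + y)))
      - of_nat CARD('a) * of_bool (w = char_one) * (F x y * kdelta (x + y)) - F x y)"
    by (simp only: jstar_transform_snd[OF w]) (simp add: sum_distrib_left algebra_simps)
  also have "\<dots> = (\<Sum>t\<in>T. of_bool (q t = w) * (\<Sum>x\<in>UNIV. \<Sum>y\<in>UNIV. F x y * p t (x + y)))
      - of_nat CARD('a) * of_bool (w = char_one) * (\<Sum>x\<in>UNIV. \<Sum>y\<in>UNIV. F x y * kdelta (x + y))
      - (\<Sum>x\<in>UNIV. \<Sum>y\<in>UNIV. F x y)"
    by (simp add: sum_subtractf sum_distrib_left sum.swap[where B = T])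
  also have "\<dots> = of_nat CARD('a) *
      ((\<Sum>t\<in>T. of_bool (q t = w) * jstar_coeff T p q (char_div a (p t)) (char_div b (p t)))
      - of_bool (w = char_one) * ((\<Sum>t\<in>T. of_bool (char_div (p t) (q t) = char_div a b)) - 2)
      - jstar_coeff T p q a b)"
    by (simp add: shifted antidiagonal unshifted sum_distrib_left algebra_simps)
  finally show ?thesis .
qed

lemma transform_cocycle_rhs:
  assumes a: "a \<in> dual" and b: "b \<in> dual" and w: "w \<in> dual"
  shows "(\<Sum>x\<in>UNIV. \<Sum>y\<in>UNIV. \<Sum>z\<in>UNIV.
      Jstar J x (y + z) * Jstar J y z * inverse (a x) * inverse (b y) * inverse (w z)) =
    of_nat CARD('a) *
      ((\<Sum>t\<in>T. of_bool (p t = a) * jstar_coeff T p q (char_div b (q t)) (char_div w (q t)))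
      - of_bool (a = char_one) * ((\<Sum>t\<in>T. of_bool (char_div (q t) (p t) = char_div w b)) - 2)
      - jstar_coeff T p q b w)"
proof -
  interpret swapped: character_expansion "\<lambda>x y. J y x" T q p
    by (rule character_expansion_swap)
  have "(\<Sum>x\<in>UNIV. \<Sum>y\<in>UNIV. \<Sum>z\<in>UNIV.
      Jstar J x (y + z) * Jstar J y z * inverse (a x) * inverse (b y) * inverse (w z)) =
    (\<Sum>z\<in>UNIV. \<Sum>y\<in>UNIV. \<Sum>x\<in>UNIV.
      Jstar J x (y + z) * Jstar J y z * inverse (a x) * inverse (b y) * inverse (w z))"
    by (rule sum_reverse3)
  also have "\<dots> = (\<Sum>z\<in>UNIV. \<Sum>y\<in>UNIV. \<Sum>x\<in>UNIV.
      Jstar (\<lambda>x y. J y x) z y * Jstar (\<lambda>x y. J y x) (z + y) x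
        * inverse (w z) * inverse (b y) * inverse (a x))"
    by (simp add: Jstar_swap[of J] add.commute mult_ac)
      \<comment> \<open>instantiated: unrestricted, the rule also matches \<open>Jstar J\<close> itself and loops\<close>
  finally show ?thesis
    using a b w by (simp add: swapped.transform_cocycle_lhs jstar_coeff_swap)
qed

end

section \<open>The operation on the dual with a zero adjoined\<close>

lemma oplus_None_right [simp]: "oplus c i u None = u"
  by (cases u) simp_all

lemma oplus_Some_Some:
  "oplus c i (Some u) (Some v) =
    (if u = char_mult c v then None else Some (char_div u (i (char_div u v))))"
  by (simp add: char_div_def)

declare oplus.simps(3) [simp del]

lemma oplus_char_mult_Some:
  assumes z: "z \<in> dual"
  shows "oplus c i (Some (char_mult z u)) (Some (char_mult z v)) =
    map_option (char_mult z) (oplus c i (Some u) (Some v))"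
proof -
  have "char_mult z u = char_mult c (char_mult z v) \<longleftrightarrow> u = char_mult c v"
    using z by (auto simp: fun_eq_iff char_mult_def dual_nonzero)
  moreover have "char_div (char_mult z u) (char_mult z v) = char_div u v"
    using z by (simp add: fun_eq_iff char_div_def char_mult_def char_inv_def dual_nonzero)
  moreover have "char_div (char_mult z u) (i w) = char_mult z (char_div u (i w))" for w
    by (simp add: fun_eq_iff char_div_def char_mult_def)
  ultimately show ?thesis
    by (simp only: oplus_Some_Some) simp
qed

lemma oplus_map_char_mult:
  "z \<in> dual \<Longrightarrow> oplus c i (map_option (char_mult z) u) (map_option (char_mult z) v) =
    map_option (char_mult z) (oplus c i u v)"
  by (cases u; cases v) (simp_all add: oplus_char_mult_Some)

lemma map_char_mult_eq_Some_iff: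
  "z \<in> dual \<Longrightarrow> map_option (char_mult z) r = Some (char_mult z e) \<longleftrightarrow> r = Some e"
  by (cases r) (auto simp: fun_eq_iff char_mult_def dual_nonzero)

lemma Some_in_Fset [simp]: "Some u \<in> Fset \<longleftrightarrow> u \<in> dual"
  by (auto simp: Fset_def)

locale jacobi_oplus = character_expansion J "dual - {c}" i "\<lambda>t. char_div (i t) t"
  for J :: "'a::{finite,ab_group_add} \<Rightarrow> 'a \<Rightarrow> complex" and c i +
  assumes cocycle: "Jstar J x y * Jstar J (x + y) z = Jstar J x (y + z) * Jstar J y z"
begin

abbreviation oplus_F (infixl "\<oplus>" 65) where "u \<oplus> v \<equiv> oplus c i u v"

lemma oplus_Some_in_dual:
  assumes u: "u \<in> dual" and v: "v \<in> dual" and "Some u \<oplus> Some v = Some e"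
  shows "e \<in> dual"
proof -
  have "u \<noteq> char_mult c v" and e: "e = char_div u (i (char_div u v))"
    using assms(3) by (simp_all add: oplus_Some_Some split: if_splits)
  then have "char_div u v \<in> dual - {c}"
    using u v by (simp add: char_div_in_dual char_div_eq_iff)
  then show ?thesis
    unfolding e using u by (simp add: char_div_in_dual p_dual)
qed

lemma oplus_in_Fset: "u \<in> Fset \<Longrightarrow> v \<in> Fset \<Longrightarrow> u \<oplus> v \<in> Fset"
  by (cases "u \<oplus> v") (auto simp: Fset_def dest: oplus_Some_in_dual)

lemma pair_count_eq_oplus:
  assumes u: "u \<in> dual" and v: "v \<in> dual"
  shows "pair_count (dual - {c}) i (\<lambda>t. char_div (i t) t) u v =
    of_bool (Some u \<oplus> Some v = Some char_one)"
proof -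
  have "(i t = u \<and> char_div (i t) t = v) \<longleftrightarrow> (t = char_div u v \<and> i (char_div u v) = u)"
    if "t \<in> dual - {c}" for t
    using that u v
    by (auto simp: char_div_eq_iff char_mult_commute char_div_mult_cancel char_mult_div_cancel)
  then have "pair_count (dual - {c}) i (\<lambda>t. char_div (i t) t) u v =
      (\<Sum>t\<in>dual - {c}. of_bool (t = char_div u v) * of_bool (i (char_div u v) = u))"
    unfolding pair_count_def by (intro sum.cong) (auto simp: of_bool_conj[symmetric])
  also have "\<dots> = of_bool (char_div u v \<in> dual - {c} \<and> i (char_div u v) = u)"
    by (simp only: sum_distrib_right[symmetric] sum_of_bool_eq_point[OF finite_index] of_bool_conj)
  also have "\<dots> = of_bool (Some u \<oplus> Some v = Some char_one)"
    using u v p_dual[of "char_div u v"]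
    by (auto simp: oplus_Some_Some char_div_in_dual char_div_eq_iff eq_commute[of char_one])
  finally show ?thesis .
qed

lemma jstar_coeff_eq_oplus:
  assumes "a \<in> dual" and "b \<in> dual"
  shows "jstar_coeff (dual - {c}) i (\<lambda>t. char_div (i t) t) a b =
    of_bool (Some a \<oplus> Some b = Some char_one) - of_bool (a = char_one) - of_bool (b = char_one)"
  using assms by (simp add: jstar_coeff_def pair_count_eq_oplus)

lemma jstar_coeff_char_div:
  assumes a: "a \<in> dual" and b: "b \<in> dual" and z: "z \<in> dual"
  shows "jstar_coeff (dual - {c}) i (\<lambda>t. char_div (i t) t) (char_div a z) (char_div b z) =
    of_bool (Some a \<oplus> Some b = Some z) - of_bool (a = z) - of_bool (b = z)"
proof -
  have "Some a \<oplus> Some b = map_option (char_mult z) (Some (char_div a z) \<oplus> Some (char_div b z))"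
    using oplus_char_mult_Some[OF z, of c i "char_div a z" "char_div b z"] z
    by (simp add: char_mult_div_cancel)
  moreover have "char_mult z char_one = z"
    by (simp add: char_mult_def char_one_def)
  ultimately have "Some a \<oplus> Some b = Some z \<longleftrightarrow>
      Some (char_div a z) \<oplus> Some (char_div b z) = Some char_one"
    using map_char_mult_eq_Some_iff[OF z] by metis
  then show ?thesis
    using a b z by (simp add: jstar_coeff_eq_oplus char_div_in_dual char_div_eq_iff)
qed

lemma sum_oplus_left:
  assumes r: "r \<in> Fset" and w: "w \<in> dual"
  shows "(\<Sum>t\<in>dual - {c}. of_bool (char_div (i t) t = w \<and> r = Some (i t)) :: complex) =
    of_bool (r \<oplus> Some w = Some char_one) - of_bool (r = None \<and> w = char_one)"
proof (cases r)
  case (Some e)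
  then have e: "e \<in> dual"
    using r by (auto simp: Fset_def)
  have "(\<Sum>t\<in>dual - {c}. of_bool (char_div (i t) t = w \<and> r = Some (i t))) =
      pair_count (dual - {c}) i (\<lambda>t. char_div (i t) t) e w"
    unfolding pair_count_def Some by (intro sum.cong) auto
  also have "\<dots> = of_bool (r \<oplus> Some w = Some char_one) - of_bool (r = None \<and> w = char_one)"
    using Some e assms by (simp add: pair_count_eq_oplus)
  finally show ?thesis .
qed simp

lemma sum_oplus_right:
  assumes a: "a \<in> dual" and r: "r \<in> Fset"
  shows "(\<Sum>t\<in>dual - {c}. of_bool (i t = a \<and> r = Some (char_div (i t) t)) :: complex) =
    of_bool (Some a \<oplus> r = Some char_one) - of_bool (r = None \<and> a = char_one)"
proof (cases r)
  case (Some e)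
  then have e: "e \<in> dual"
    using r by (auto simp: Fset_def)
  have "(\<Sum>t\<in>dual - {c}. of_bool (i t = a \<and> r = Some (char_div (i t) t))) =
      pair_count (dual - {c}) i (\<lambda>t. char_div (i t) t) a e"
    unfolding pair_count_def Some by (intro sum.cong) auto
  also have "\<dots> = of_bool (Some a \<oplus> r = Some char_one) - of_bool (r = None \<and> a = char_one)"
    using Some e assms by (simp add: pair_count_eq_oplus)
  finally show ?thesis .
qed simp

definition cocycle_common_term :: "('a \<Rightarrow> complex) \<Rightarrow> ('a \<Rightarrow> complex) \<Rightarrow> ('a \<Rightarrow> complex) \<Rightarrow> complex"
  where "cocycle_common_term a b w =
    of_bool (Some a \<oplus> Some b = Some char_one) + of_bool (Some a \<oplus> Some w = Some char_one)
    + of_bool (Some b \<oplus> Some w = Some char_one)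
    - of_bool (a = char_one) - of_bool (b = char_one) - of_bool (w = char_one)"

lemma transform_cocycle_lhs_oplus:
  assumes a: "a \<in> dual" and b: "b \<in> dual" and w: "w \<in> dual"
  shows "(\<Sum>x\<in>UNIV. \<Sum>y\<in>UNIV. \<Sum>z\<in>UNIV.
      Jstar J x y * Jstar J (x + y) z * inverse (a x) * inverse (b y) * inverse (w z)) =
    of_nat CARD('a) * (of_bool ((Some a \<oplus> Some b) \<oplus> Some w = Some char_one) - cocycle_common_term a b w)"
proof -
  have "(\<Sum>t\<in>dual - {c}. of_bool (char_div (i t) t = w) *
        jstar_coeff (dual - {c}) i (\<lambda>t. char_div (i t) t) (char_div a (i t)) (char_div b (i t))) =
      (\<Sum>t\<in>dual - {c}. of_bool (char_div (i t) t = w \<and> Some a \<oplus> Some b = Some (i t))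
        - of_bool (i t = a \<and> char_div (i t) t = w) - of_bool (i t = b \<and> char_div (i t) t = w))"
    using a b by (intro sum.cong refl) (auto simp: jstar_coeff_char_div p_dual)
  also have "\<dots> = (\<Sum>t\<in>dual - {c}. of_bool (char_div (i t) t = w \<and> Some a \<oplus> Some b = Some (i t)))
      - pair_count (dual - {c}) i (\<lambda>t. char_div (i t) t) a w
      - pair_count (dual - {c}) i (\<lambda>t. char_div (i t) t) b w"
    by (simp only: sum_subtractf pair_count_def)
  also have "\<dots> = of_bool ((Some a \<oplus> Some b) \<oplus> Some w = Some char_one)
      - of_bool (Some a \<oplus> Some b = None \<and> w = char_one)
      - of_bool (Some a \<oplus> Some w = Some char_one) - of_bool (Some b \<oplus> Some w = Some char_one)"
    using a b w by (simp add: sum_oplus_left oplus_in_Fset pair_count_eq_oplus)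
  finally have coeffs: "(\<Sum>t\<in>dual - {c}. of_bool (char_div (i t) t = w) *
        jstar_coeff (dual - {c}) i (\<lambda>t. char_div (i t) t) (char_div a (i t)) (char_div b (i t))) =
      of_bool ((Some a \<oplus> Some b) \<oplus> Some w = Some char_one)
      - of_bool (Some a \<oplus> Some b = None \<and> w = char_one)
      - of_bool (Some a \<oplus> Some w = Some char_one) - of_bool (Some b \<oplus> Some w = Some char_one)" .
  have "(\<Sum>t\<in>dual - {c}. of_bool (char_div (i t) (char_div (i t) t) = char_div a b)) =
      (\<Sum>t\<in>dual - {c}. of_bool (t = char_div a b) :: complex)"
    by (intro sum.cong refl) (simp add: char_div_div_cancel p_dual)
  also have "\<dots> = of_bool (Some a \<oplus> Some b \<noteq> None)"
    using a b by (simp add: sum_of_bool_eq_point[OF finite_index] char_div_in_dual char_div_eq_iff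
        oplus_Some_Some)
  finally have antidiagonal: "(\<Sum>t\<in>dual - {c}. of_bool (char_div (i t) (char_div (i t) t) = char_div a b) :: complex) =
      of_bool (Some a \<oplus> Some b \<noteq> None)" .
  show ?thesis
    unfolding transform_cocycle_lhs[OF a b w] coeffs antidiagonal
    using a b
    by (cases "w = char_one"; cases "Some a \<oplus> Some b = None")
      (simp_all add: jstar_coeff_eq_oplus cocycle_common_term_def algebra_simps)
qed

lemma transform_cocycle_rhs_oplus:
  assumes a: "a \<in> dual" and b: "b \<in> dual" and w: "w \<in> dual"
  shows "(\<Sum>x\<in>UNIV. \<Sum>y\<in>UNIV. \<Sum>z\<in>UNIV.
      Jstar J x (y + z) * Jstar J y z * inverse (a x) * inverse (b y) * inverse (w z)) =
    of_nat CARD('a) * (of_bool (Some a \<oplus> (Some b \<oplus> Some w) = Some char_one) - cocycle_common_term a b w)"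
proof -
  have "(\<Sum>t\<in>dual - {c}. of_bool (i t = a) *
        jstar_coeff (dual - {c}) i (\<lambda>t. char_div (i t) t)
          (char_div b (char_div (i t) t)) (char_div w (char_div (i t) t))) =
      (\<Sum>t\<in>dual - {c}. of_bool (i t = a \<and> Some b \<oplus> Some w = Some (char_div (i t) t))
        - of_bool (i t = a \<and> char_div (i t) t = b) - of_bool (i t = a \<and> char_div (i t) t = w))"
    using b w by (intro sum.cong refl) (auto simp: jstar_coeff_char_div char_div_in_dual p_dual)
  also have "\<dots> = (\<Sum>t\<in>dual - {c}. of_bool (i t = a \<and> Some b \<oplus> Some w = Some (char_div (i t) t)))
      - pair_count (dual - {c}) i (\<lambda>t. char_div (i t) t) a b
      - pair_count (dual - {c}) i (\<lambda>t. char_div (i t) t) a w"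
    by (simp only: sum_subtractf pair_count_def)
  also have "\<dots> = of_bool (Some a \<oplus> (Some b \<oplus> Some w) = Some char_one)
      - of_bool (Some b \<oplus> Some w = None \<and> a = char_one)
      - of_bool (Some a \<oplus> Some b = Some char_one) - of_bool (Some a \<oplus> Some w = Some char_one)"
    using a b w by (simp add: sum_oplus_right oplus_in_Fset pair_count_eq_oplus)
  finally have coeffs: "(\<Sum>t\<in>dual - {c}. of_bool (i t = a) *
        jstar_coeff (dual - {c}) i (\<lambda>t. char_div (i t) t)
          (char_div b (char_div (i t) t)) (char_div w (char_div (i t) t))) =
      of_bool (Some a \<oplus> (Some b \<oplus> Some w) = Some char_one)
      - of_bool (Some b \<oplus> Some w = None \<and> a = char_one)
      - of_bool (Some a \<oplus> Some b = Some char_one) - of_bool (Some a \<oplus> Some w = Some char_one)" .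
  have "(\<Sum>t\<in>dual - {c}. of_bool (char_div (char_div (i t) t) (i t) = char_div w b)) =
      (\<Sum>t\<in>dual - {c}. of_bool (t = char_div b w) :: complex)"
    using b w by (intro sum.cong refl) (simp add: char_div_left_cancel char_inv_eq_char_div_iff p_dual)
  also have "\<dots> = of_bool (Some b \<oplus> Some w \<noteq> None)"
    using b w by (simp add: sum_of_bool_eq_point[OF finite_index] char_div_in_dual char_div_eq_iff
        oplus_Some_Some)
  finally have antidiagonal: "(\<Sum>t\<in>dual - {c}.
      of_bool (char_div (char_div (i t) t) (i t) = char_div w b) :: complex) =
      of_bool (Some b \<oplus> Some w \<noteq> None)" .
  show ?thesis
    unfolding transform_cocycle_rhs[OF a b w] coeffs antidiagonal
    using b w
    by (cases "a = char_one"; cases "Some b \<oplus> Some w = None")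
      (simp_all add: jstar_coeff_eq_oplus cocycle_common_term_def algebra_simps)
qed

lemma oplus_assoc_eq_one:
  assumes a: "a \<in> dual" and b: "b \<in> dual" and w: "w \<in> dual"
  shows "(Some a \<oplus> Some b) \<oplus> Some w = Some char_one \<longleftrightarrow>
    Some a \<oplus> (Some b \<oplus> Some w) = Some char_one"
proof -
  have "(\<Sum>x\<in>UNIV. \<Sum>y\<in>UNIV. \<Sum>z\<in>UNIV.
        Jstar J x y * Jstar J (x + y) z * inverse (a x) * inverse (b y) * inverse (w z)) =
      (\<Sum>x\<in>UNIV. \<Sum>y\<in>UNIV. \<Sum>z\<in>UNIV.
        Jstar J x (y + z) * Jstar J y z * inverse (a x) * inverse (b y) * inverse (w z))"
    by (simp only: cocycle)
  then show ?thesis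
    unfolding transform_cocycle_lhs_oplus[OF a b w] transform_cocycle_rhs_oplus[OF a b w]
    by (simp add: of_bool_eq_iff)
qed

lemma oplus_assoc_dual:
  assumes a: "a \<in> dual" and b: "b \<in> dual" and w: "w \<in> dual"
  shows "(Some a \<oplus> Some b) \<oplus> Some w = Some a \<oplus> (Some b \<oplus> Some w)"
proof -
  have scaled: "(Some (char_mult z a) \<oplus> Some (char_mult z b)) \<oplus> Some (char_mult z w) =
        map_option (char_mult z) ((Some a \<oplus> Some b) \<oplus> Some w)"
      "Some (char_mult z a) \<oplus> (Some (char_mult z b) \<oplus> Some (char_mult z w)) =
        map_option (char_mult z) (Some a \<oplus> (Some b \<oplus> Some w))" if z: "z \<in> dual" for z
    using oplus_map_char_mult[OF z, of c i] by (metis option.map)+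
  have eq_iff: "(Some a \<oplus> Some b) \<oplus> Some w = Some e \<longleftrightarrow> Some a \<oplus> (Some b \<oplus> Some w) = Some e"
    if e: "e \<in> dual" for e
  proof -
    \<comment> \<open>multiplying by \<open>e\<inverse>\<close> reduces the value \<open>e\<close> to \<open>1\<close>\<close>
    have z: "char_inv e \<in> dual"
      using e by (rule char_inv_in_dual)
    have ze: "char_mult (char_inv e) e = char_one"
      using e by (simp add: fun_eq_iff char_mult_def char_inv_def char_one_def dual_nonzero)
    have "(Some a \<oplus> Some b) \<oplus> Some w = Some e \<longleftrightarrow>
        map_option (char_mult (char_inv e)) ((Some a \<oplus> Some b) \<oplus> Some w) = Some char_one"
      using map_char_mult_eq_Some_iff[OF z] ze by metis
    also have "\<dots> \<longleftrightarrow> map_option (char_mult (char_inv e)) (Some a \<oplus> (Some b \<oplus> Some w)) = Some char_one"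
      using a b w z by (simp flip: scaled add: oplus_assoc_eq_one char_mult_in_dual)
    also have "\<dots> \<longleftrightarrow> Some a \<oplus> (Some b \<oplus> Some w) = Some e"
      using map_char_mult_eq_Some_iff[OF z] ze by metis
    finally show ?thesis .
  qed
  have "(Some a \<oplus> Some b) \<oplus> Some w \<in> Fset" and "Some a \<oplus> (Some b \<oplus> Some w) \<in> Fset"
    using a b w by (simp_all add: oplus_in_Fset)
  then consider "(Some a \<oplus> Some b) \<oplus> Some w = None" "Some a \<oplus> (Some b \<oplus> Some w) = None"
    | e where "e \<in> dual"
      "(Some a \<oplus> Some b) \<oplus> Some w = Some e \<or> Some a \<oplus> (Some b \<oplus> Some w) = Some e"
    by (auto simp: Fset_def)
  then show ?thesis
    by cases (metis eq_iff)+
qed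

lemma oplus_assoc: "\<forall>u\<in>Fset. \<forall>v\<in>Fset. \<forall>w\<in>Fset. (u \<oplus> v) \<oplus> w = u \<oplus> (v \<oplus> w)"
  by (auto simp: Fset_def oplus_assoc_dual)

end

theorem mainTheorem12:
  fixes J :: "'a::{finite,ab_group_add} \<Rightarrow> 'a \<Rightarrow> complex"
    and c :: "'a \<Rightarrow> complex"
    and i :: "('a \<Rightarrow> complex) \<Rightarrow> ('a \<Rightarrow> complex)"
  assumes J: "jacobi_function J"
    and c: "c \<in> dual" and c2: "char_mult c c = char_one"
    and i_bij: "bij_betw i (dual - {c}) (dual - {char_one})"
    and i_sym: "\<forall>x\<in>dual - {c}. i x = char_mult x (i (char_inv x))"
    and J_eq: "\<forall>a b. J a b = (1 / of_nat (card (UNIV :: 'a set))) *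
                 (\<Sum>x\<in>dual - {c}. i x a * char_mult (i x) (char_inv x) b)"
  shows "\<forall>u\<in>Fset. \<forall>v\<in>Fset. \<forall>w\<in>Fset. oplus c i (oplus c i u v) w = oplus c i u (oplus c i v w)"
proof -
  \<comment> \<open>Only (B) and the formula for \<open>J\<close> are needed, and of the bijectivity of \<open>i\<close> only that it
    maps into the dual: \<open>c\<close>, \<open>c2\<close>, \<open>i_sym\<close> and the axioms (A), (C) of a Jacobi function are unused.\<close>
  have i_dual: "i t \<in> dual" if "t \<in> dual - {c}" for t
    using i_bij that by (auto simp: bij_betw_def)
  interpret jacobi_oplus J c i
  proof
    show "finite (dual - {c})"
      using finite_dual by simp
    show "i t \<in> dual" "char_div (i t) t \<in> dual" if "t \<in> dual - {c}" for t
      using i_dual[OF that] that by (simp_all add: char_div_in_dual)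
    show "J x y = 1 / of_nat CARD('a) * (\<Sum>t\<in>dual - {c}. i t x * char_div (i t) t y)" for x y
      using J_eq by (simp add: char_div_def)
    show "Jstar J x y * Jstar J (x + y) z = Jstar J x (y + z) * Jstar J y z" for x y z
      using J by (simp add: jacobi_function_def)
  qed
  show ?thesis
    by (rule oplus_assoc)
qed

end
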